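(* Let $(X,\Sigma)$ be a test space with $X$ finite, and let $\mathrm{Pl}:E(X,\Sigma)\to D$ be a plausibility measure on it. Then the following are equivalent: (a) $\mathrm{Pl}$ agrees with some probability measure $\mu$ on $(X,\Sigma)$, meaning that for all events $A,B$ we have $\mathrm{Pl}(A)\preceq\mathrm{Pl}(B)$ if and only if $\mu(A)\le\mu(B)$; (b) the image of $\mathrm{Pl}$ is totally ordered by $\preceq$ and $\mathrm{Pl}$ is Archimedean.
   Context: A test space $(X,\Sigma)$ is a set $X$ of outcomes together with a set $\Sigma\subseteq 2^X$ of subsets (called tests) with $\bigcup_{T\in\Sigma}T=X$. An event is a subset of $X$ that is contained in some test, and $E(X,\Sigma)$ denotes the set of all events. A probability measure on $(X,\Sigma)$ is a function $\mu:X\to\mathbb{R}_{\ge0}$ with $\sum_{x\in T}\mu(x)=1$ for every $T\in\Sigma$. It is extended to events by $\mu(A)=\sum_{x\in A}\mu(x)$. A plausibility measure is a function $\mathrm{Pl}:E(X,\Sigma)\to D$, where $(D,\preceq)$ is a partially ordered set, satisfying three conditions: (i) $\mathrm{Pl}(T)=\mathrm{Pl}(R)$ for all $T,R\in\Sigma$; (ii) $A\subseteq B$ implies $\mathrm{Pl}(A)\preceq\mathrm{Pl}(B)$; (iii) $\mathrm{Pl}(\emptyset)\prec\mathrm{Pl}(T)$ for every $T\in\Sigma$. Here $a\prec b$ means $a\preceq b$ and $b\not\preceq a$. $\mathrm{Pl}$ is Archimedean if the following holds for every $n\ge1$ and every pair of finite families of events $(A_1,\dots,A_n)$ and $(B_1,\dots,B_n)$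 such that each outcome $x\in X$ belongs to the same number of the $A_i$ as of the $B_i$ (counted with multiplicity): whenever $\mathrm{Pl}(A_i)\preceq\mathrm{Pl}(B_i)$ for all $i=1,\dots,n-1$, then $\mathrm{Pl}(A_n)\succeq\mathrm{Pl}(B_n)$. *)

theory Defs
  imports Complex_Main
begin

definition test_space :: "'a set \<Rightarrow> 'a set set \<Rightarrow> bool" where
  "test_space X \<Sigma> \<longleftrightarrow> \<Sigma> \<subseteq> Pow X \<and> \<Union>\<Sigma> = X"

definition events :: "'a set \<Rightarrow> 'a set set \<Rightarrow> 'a set set" where
  "events X \<Sigma> = {A. A \<subseteq> X \<and> (\<exists>T\<in>\<Sigma>. A \<subseteq> T)}"

text \<open>Probability measure, given by its weights on outcomes; extended to events by summation.\<close>
definition prob_measure :: "'a set \<Rightarrow> 'a set set \<Rightarrow> ('a \<Rightarrow> real) \<Rightarrow> bool" where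
  "prob_measure X \<Sigma> \<mu> \<longleftrightarrow> (\<forall>x\<in>X. \<mu> x \<ge> 0) \<and> (\<forall>T\<in>\<Sigma>. (\<Sum>x\<in>T. \<mu> x) = 1)"

text \<open>Plausibility measure with values in a partially ordered type 'd (only its values
  on events matter).\<close>
definition plausibility :: "'a set \<Rightarrow> 'a set set \<Rightarrow> ('a set \<Rightarrow> 'd::order) \<Rightarrow> bool" where
  "plausibility X \<Sigma> Pl \<longleftrightarrow>
     (\<forall>T\<in>\<Sigma>. \<forall>R\<in>\<Sigma>. Pl T = Pl R) \<and>
     (\<forall>A\<in>events X \<Sigma>. \<forall>B\<in>events X \<Sigma>. A \<subseteq> B \<longrightarrow> Pl A \<le> Pl B) \<and>
     (\<forall>T\<in>\<Sigma>. Pl {} < Pl T)"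

definition archimedean :: "'a set \<Rightarrow> 'a set set \<Rightarrow> ('a set \<Rightarrow> 'd::order) \<Rightarrow> bool" where
  "archimedean X \<Sigma> Pl \<longleftrightarrow>
     (\<forall>n::nat. \<forall>A B :: nat \<Rightarrow> 'a set.
        n \<ge> 1 \<and>
        (\<forall>i\<in>{1..n}. A i \<in> events X \<Sigma> \<and> B i \<in> events X \<Sigma>) \<and>
        (\<forall>x\<in>X. card {i\<in>{1..n}. x \<in> A i} = card {i\<in>{1..n}. x \<in> B i}) \<and>
        (\<forall>i\<in>{1..<n}. Pl (A i) \<le> Pl (B i))
        \<longrightarrow> Pl (B n) \<le> Pl (A n))"

definition agrees_with :: "'a set \<Rightarrow> 'a set set \<Rightarrow> ('a set \<Rightarrow> 'd::order) \<Rightarrow> ('a \<Rightarrow> real) \<Rightarrow> bool" where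
  "agrees_with X \<Sigma> Pl \<mu> \<longleftrightarrow>
     (\<forall>A\<in>events X \<Sigma>. \<forall>B\<in>events X \<Sigma>. Pl A \<le> Pl B \<longleftrightarrow> (\<Sum>x\<in>A. \<mu> x) \<le> (\<Sum>x\<in>B. \<mu> x))"

end

theory Submission
  imports Defs
begin

text \<open>
  Necessity: if \<mu> represents Pl, then summing \<mu> over two families of events that cover
  every outcome equally often gives equal totals, so the first n - 1 inequalities force the
  last one to hold backwards.

  Sufficiency: every pair of events A, B with Pl A \<le> Pl B imposes the linear constraint
  \<mu>(B) - \<mu>(A) \<ge> 0 on the weights, strict when Pl A < Pl B. If this finite system had no
  solution, Motzkin's transposition theorem (proved by Fourier--Motzkin elimination) would
  yield a positive integer combination of the constraints, at least one of them strict, in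
  which every outcome has coefficient 0; listing the pairs of that combination with a strict
  one last gives two families violating the Archimedean property. A solution agrees with Pl
  by totality, is nonnegative because Pl {} \<le> Pl {x}, and has the same positive total on all
  tests, so normalising it gives the probability measure.
\<close>

section \<open>Motzkin's transposition theorem\<close>

definition lin_form :: "'x set \<Rightarrow> ('x \<Rightarrow> int) \<Rightarrow> ('x \<Rightarrow> real) \<Rightarrow> real" where
  "lin_form X a \<mu> = (\<Sum>x\<in>X. of_int (a x) * \<mu> x)"

text \<open>A constraint \<open>(a, s)\<close> stands for the inequality \<open>lin_form X a \<mu> \<ge> 0\<close>, strict if \<open>s\<close>.\<close>
definition satisfies :: "'x set \<Rightarrow> (('x \<Rightarrow> int) \<times> bool) set \<Rightarrow> ('x \<Rightarrow> real) \<Rightarrow> bool" where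
  "satisfies X J \<mu> \<longleftrightarrow>
     (\<forall>j\<in>J. if snd j then 0 < lin_form X (fst j) \<mu> else 0 \<le> lin_form X (fst j) \<mu>)"

inductive_set pos_combs :: "(('x \<Rightarrow> int) \<times> bool) set \<Rightarrow> (('x \<Rightarrow> int) \<times> bool) set"
  for J where
  base: "j \<in> J \<Longrightarrow> j \<in> pos_combs J"
| add: "(a, s) \<in> pos_combs J \<Longrightarrow> (b, t) \<in> pos_combs J \<Longrightarrow> (\<lambda>x. a x + b x, s \<or> t) \<in> pos_combs J"
| scale: "(a, s) \<in> pos_combs J \<Longrightarrow> (k::int) > 0 \<Longrightarrow> (\<lambda>x. k * a x, s) \<in> pos_combs J"

lemma pos_combs_subset:
  assumes "J' \<subseteq> pos_combs J"
  shows "pos_combs J' \<subseteq> pos_combs J"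
proof
  fix j assume "j \<in> pos_combs J'"
  then show "j \<in> pos_combs J"
    by induction (auto intro: pos_combs.intros assms[THEN subsetD])
qed

lemma pos_combs_coeff_zero:
  "j \<in> pos_combs J \<Longrightarrow> \<forall>i\<in>J. fst i x = 0 \<Longrightarrow> fst j x = 0"
  by (induction rule: pos_combs.induct) auto

lemma pos_combs_sum_list:
  assumes "j \<in> pos_combs J"
  shows "\<exists>ps. ps \<noteq> [] \<and> set ps \<subseteq> J \<and> (\<forall>x. fst j x = (\<Sum>p\<leftarrow>ps. fst p x)) \<and>
    (snd j \<longrightarrow> snd (last ps))"
  using assms
proof induction
  case (base j)
  show ?case using base by (intro exI[of _ "[j]"]) auto
next
  case (add a s b t)
  then obtain ps qs where
    ps: "ps \<noteq> []" "set ps \<subseteq> J" "\<forall>x. a x = (\<Sum>p\<leftarrow>ps. fst p x)" "s \<longrightarrow> snd (last ps)" and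
    qs: "qs \<noteq> []" "set qs \<subseteq> J" "\<forall>x. b x = (\<Sum>p\<leftarrow>qs. fst p x)" "t \<longrightarrow> snd (last qs)"
    by auto
  show ?case
  proof (cases t)
    case True
    then show ?thesis using ps qs by (intro exI[of _ "ps @ qs"]) auto
  next
    case False
    then show ?thesis using ps qs by (intro exI[of _ "qs @ ps"]) auto
  qed
next
  case (scale a s k)
  then obtain ps where
    ps: "ps \<noteq> []" "set ps \<subseteq> J" "\<forall>x. a x = (\<Sum>p\<leftarrow>ps. fst p x)" "s \<longrightarrow> snd (last ps)"
    by auto
  have "last (concat (replicate m ps)) = last ps" if "m > 0" for m
    using that ps(1) by (induction m) (auto simp: last_append)
  moreover have "(\<Sum>p\<leftarrow>concat (replicate m ps). fst p x) = int m * (\<Sum>p\<leftarrow>ps. fst p x)" for m x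
    by (induction m) (auto simp: algebra_simps)
  ultimately show ?case
    using ps scale.hyps by (intro exI[of _ "concat (replicate (nat k) ps)"]) auto
qed

lemma exists_between_bounds:
  fixes L U :: "'j \<Rightarrow> real"
  assumes "finite P" "finite N"
    and LU: "\<And>p q. p \<in> P \<Longrightarrow> q \<in> N \<Longrightarrow> L p \<le> U q \<and> (s p \<or> s q \<longrightarrow> L p < U q)"
  shows "\<exists>t. (\<forall>p\<in>P. L p \<le> t \<and> (s p \<longrightarrow> L p < t)) \<and> (\<forall>q\<in>N. t \<le> U q \<and> (s q \<longrightarrow> t < U q))"
proof -
  define l where "l = Max (L ` P)"
  define u where "u = Min (U ` N)"
  have l: "\<forall>p\<in>P. L p \<le> l" and u: "\<forall>q\<in>N. u \<le> U q"
    using assms(1,2) by (auto simp: l_def u_def)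
  consider "N = {}" | "P = {}" "N \<noteq> {}" | "P \<noteq> {}" "N \<noteq> {}" by blast
  then show ?thesis
  proof cases
    case 1
    show ?thesis using l 1 by (intro exI[of _ "l + 1"]) fastforce
  next
    case 2
    show ?thesis using u 2 by (intro exI[of _ "u - 1"]) fastforce
  next
    case 3
    have "l \<in> L ` P" "u \<in> U ` N"
      using 3 assms(1,2) unfolding l_def u_def by (simp_all add: Max_in Min_in)
    then obtain p0 q0 where "p0 \<in> P" "L p0 = l" "q0 \<in> N" "U q0 = u" by force
    have "l \<le> u" using LU[of p0 q0] \<open>p0 \<in> P\<close> \<open>q0 \<in> N\<close> \<open>L p0 = l\<close> \<open>U q0 = u\<close> by simp
    have "L p \<le> (l + u) / 2 \<and> (s p \<longrightarrow> L p < (l + u) / 2)" if "p \<in> P" for p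
      using LU[of p q0] l that \<open>l \<le> u\<close> \<open>q0 \<in> N\<close> \<open>U q0 = u\<close> by fastforce
    moreover have "(l + u) / 2 \<le> U q \<and> (s q \<longrightarrow> (l + u) / 2 < U q)" if "q \<in> N" for q
      using LU[of p0 q] u that \<open>l \<le> u\<close> \<open>p0 \<in> P\<close> \<open>L p0 = l\<close> by fastforce
    ultimately show ?thesis by blast
  qed
qed

lemma affine_system_solvable:
  fixes \<alpha> r :: "'j \<Rightarrow> real"
  assumes "finite J"
    and pair: "\<And>p q. p \<in> J \<Longrightarrow> q \<in> J \<Longrightarrow> \<alpha> p > 0 \<Longrightarrow> \<alpha> q < 0 \<Longrightarrow>
      (if s p \<or> s q then 0 < - \<alpha> q * r p + \<alpha> p * r q else 0 \<le> - \<alpha> q * r p + \<alpha> p * r q)"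
  shows "\<exists>t. \<forall>j\<in>J. \<alpha> j \<noteq> 0 \<longrightarrow> (if s j then 0 < \<alpha> j * t + r j else 0 \<le> \<alpha> j * t + r j)"
proof -
  define B where "B j = - r j / \<alpha> j" for j
  have lower: "(0 < \<alpha> j * t + r j \<longleftrightarrow> B j < t) \<and> (0 \<le> \<alpha> j * t + r j \<longleftrightarrow> B j \<le> t)"
    if "\<alpha> j > 0" for j t
    using that by (auto simp: B_def field_simps)
  have upper: "(0 < \<alpha> j * t + r j \<longleftrightarrow> t < B j) \<and> (0 \<le> \<alpha> j * t + r j \<longleftrightarrow> t \<le> B j)"
    if "\<alpha> j < 0" for j t
    using that by (auto simp: B_def field_simps)
  have separated: "B p \<le> B q \<and> (s p \<or> s q \<longrightarrow> B p < B q)"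
    if "p \<in> {j\<in>J. \<alpha> j > 0}" "q \<in> {j\<in>J. \<alpha> j < 0}" for p q
  proof -
    have "B p < B q \<longleftrightarrow> 0 < - \<alpha> q * r p + \<alpha> p * r q"
      "B p \<le> B q \<longleftrightarrow> 0 \<le> - \<alpha> q * r p + \<alpha> p * r q"
      using that by (auto simp: B_def field_simps)
    then show ?thesis using that pair[of p q] by (auto split: if_splits)
  qed
  have "finite {j\<in>J. \<alpha> j > 0}" "finite {j\<in>J. \<alpha> j < 0}"
    using assms(1) by simp_all
  from exists_between_bounds[where L = B and U = B and s = s, OF this separated]
  obtain t where t: "\<forall>p\<in>{j\<in>J. \<alpha> j > 0}. B p \<le> t \<and> (s p \<longrightarrow> B p < t)"
    "\<forall>q\<in>{j\<in>J. \<alpha> j < 0}. t \<le> B q \<and> (s q \<longrightarrow> t < B q)"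
    by blast
  show ?thesis
  proof (intro exI ballI impI)
    fix j assume "j \<in> J" "\<alpha> j \<noteq> 0"
    then consider "\<alpha> j > 0" | "\<alpha> j < 0" by linarith
    then show "if s j then 0 < \<alpha> j * t + r j else 0 \<le> \<alpha> j * t + r j"
      using t lower[of j t] upper[of j t] \<open>j \<in> J\<close> by cases auto
  qed
qed

definition cancel_at ::
    "'x \<Rightarrow> ('x \<Rightarrow> int) \<times> bool \<Rightarrow> ('x \<Rightarrow> int) \<times> bool \<Rightarrow> ('x \<Rightarrow> int) \<times> bool" where
  "cancel_at x0 p q = (\<lambda>x. - fst q x0 * fst p x + fst p x0 * fst q x, snd p \<or> snd q)"

text \<open>Fourier--Motzkin elimination of the variable \<open>x0\<close>.\<close>
definition eliminate :: "'x \<Rightarrow> (('x \<Rightarrow> int) \<times> bool) set \<Rightarrow> (('x \<Rightarrow> int) \<times> bool) set" where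
  "eliminate x0 J = {j\<in>J. fst j x0 = 0} \<union>
     (\<lambda>(p, q). cancel_at x0 p q) ` ({p\<in>J. fst p x0 > 0} \<times> {q\<in>J. fst q x0 < 0})"

lemma finite_eliminate: "finite J \<Longrightarrow> finite (eliminate x0 J)"
  by (simp add: eliminate_def)

lemma eliminate_coeff_zero: "j \<in> eliminate x0 J \<Longrightarrow> fst j x0 = 0"
  by (auto simp: eliminate_def cancel_at_def)

lemma eliminate_subset_pos_combs: "eliminate x0 J \<subseteq> pos_combs J"
proof
  fix j assume "j \<in> eliminate x0 J"
  then consider "j \<in> J"
    | p q where "p \<in> J" "q \<in> J" "fst p x0 > 0" "fst q x0 < 0" "j = cancel_at x0 p q"
    unfolding eliminate_def by auto
  then show "j \<in> pos_combs J"
  proof cases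
    case 1
    then show ?thesis by (rule pos_combs.base)
  next
    case 2
    have "(fst p, snd p) \<in> pos_combs J" "(fst q, snd q) \<in> pos_combs J"
      using 2 by (auto intro: pos_combs.base)
    from pos_combs.add[OF pos_combs.scale[OF this(1)] pos_combs.scale[OF this(2)],
        of "- fst q x0" "fst p x0"]
    show ?thesis using 2 by (simp add: cancel_at_def)
  qed
qed

lemma lin_form_insert_upd:
  assumes "finite X" "x0 \<notin> X"
  shows "lin_form (insert x0 X) a (\<mu>(x0 := t)) = of_int (a x0) * t + lin_form X a \<mu>"
proof -
  have "(\<Sum>x\<in>X. of_int (a x) * (\<mu>(x0 := t)) x) = (\<Sum>x\<in>X. of_int (a x) * \<mu> x)"
    using assms(2) by (intro sum.cong) auto
  then show ?thesis using assms by (simp add: lin_form_def)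
qed

lemma satisfies_eliminate_extend:
  assumes "finite X" "x0 \<notin> X" "finite J" "satisfies X (eliminate x0 J) \<mu>"
  shows "\<exists>t. satisfies (insert x0 X) J (\<mu>(x0 := t))"
proof -
  define r where "r j = lin_form X (fst j) \<mu>" for j :: "('a \<Rightarrow> int) \<times> bool"
  define \<alpha> where "\<alpha> j = real_of_int (fst j x0)" for j :: "('a \<Rightarrow> int) \<times> bool"
  have "\<exists>t. \<forall>j\<in>J. \<alpha> j \<noteq> 0 \<longrightarrow> (if snd j then 0 < \<alpha> j * t + r j else 0 \<le> \<alpha> j * t + r j)"
  proof (rule affine_system_solvable[OF assms(3)])
    fix p q assume pq: "p \<in> J" "q \<in> J" "\<alpha> p > 0" "\<alpha> q < 0"
    then have "cancel_at x0 p q \<in> eliminate x0 J" unfolding eliminate_def \<alpha>_def by force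
    moreover have "lin_form X (fst (cancel_at x0 p q)) \<mu> = - \<alpha> q * r p + \<alpha> p * r q"
      by (simp add: lin_form_def cancel_at_def r_def \<alpha>_def sum_distrib_left sum.distrib
          sum_subtractf sum_negf algebra_simps)
    ultimately show "if snd p \<or> snd q then 0 < - \<alpha> q * r p + \<alpha> p * r q
        else 0 \<le> - \<alpha> q * r p + \<alpha> p * r q"
      using assms(4) unfolding satisfies_def by (fastforce simp: cancel_at_def)
  qed
  then obtain t
    where t: "\<forall>j\<in>J. \<alpha> j \<noteq> 0 \<longrightarrow> (if snd j then 0 < \<alpha> j * t + r j else 0 \<le> \<alpha> j * t + r j)"
    by blast
  have "satisfies (insert x0 X) J (\<mu>(x0 := t))"
    unfolding satisfies_def lin_form_insert_upd[OF assms(1,2)]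
  proof
    fix j assume j: "j \<in> J"
    show "if snd j then 0 < of_int (fst j x0) * t + lin_form X (fst j) \<mu>
      else 0 \<le> of_int (fst j x0) * t + lin_form X (fst j) \<mu>"
    proof (cases "fst j x0 = 0")
      case True
      then have "j \<in> eliminate x0 J" using j by (simp add: eliminate_def)
      then show ?thesis using assms(4) True by (simp add: satisfies_def)
    next
      case False
      then show ?thesis using t j unfolding \<alpha>_def r_def by simp
    qed
  qed
  then show ?thesis ..
qed

lemma motzkin_transposition:
  assumes "finite X" "finite J" "\<nexists>\<mu>. satisfies X J \<mu>"
  shows "\<exists>a. (a, True) \<in> pos_combs J \<and> (\<forall>x\<in>X. a x = 0)"
  using assms
proof (induction X arbitrary: J rule: finite_induct)
  case empty
  have "\<exists>j\<in>J. snd j"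
  proof (rule ccontr)
    assume "\<not> (\<exists>j\<in>J. snd j)"
    then have "satisfies {} J (\<lambda>_. 0)" by (auto simp: satisfies_def lin_form_def)
    with empty.prems(2) show False by blast
  qed
  then obtain j where "j \<in> J" "snd j" by blast
  then have "(fst j, True) \<in> pos_combs J" by (metis pos_combs.base prod.collapse)
  then show ?case by blast
next
  case (insert x0 X)
  have "\<nexists>\<mu>. satisfies X (eliminate x0 J) \<mu>"
    using satisfies_eliminate_extend[OF insert.hyps insert.prems(1)] insert.prems(2) by blast
  from insert.IH[OF finite_eliminate[OF insert.prems(1)] this]
  obtain a where a: "(a, True) \<in> pos_combs (eliminate x0 J)" "\<forall>x\<in>X. a x = 0"
    by blast
  have "(a, True) \<in> pos_combs J"
    by (rule subsetD[OF pos_combs_subset[OF eliminate_subset_pos_combs] a(1)])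
  moreover have "a x0 = 0"
    using pos_combs_coeff_zero[OF a(1)] eliminate_coeff_zero by (metis fst_conv)
  ultimately show ?case using a(2) by auto
qed

section \<open>Plausibility measures agreeing with a probability measure\<close>

lemma agrees_imp_total:
  assumes "agrees_with X \<Sigma> Pl \<mu>"
  shows "\<forall>a\<in>Pl ` events X \<Sigma>. \<forall>b\<in>Pl ` events X \<Sigma>. a \<le> b \<or> b \<le> a"
  using assms unfolding agrees_with_def by auto

lemma sum_family_eq_sum_count:
  fixes \<mu> :: "'a \<Rightarrow> real"
  assumes "finite X" "finite I" "\<And>i. i \<in> I \<Longrightarrow> C i \<subseteq> X"
  shows "(\<Sum>i\<in>I. \<Sum>x\<in>C i. \<mu> x) = (\<Sum>x\<in>X. \<mu> x * card {i\<in>I. x \<in> C i})"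
proof -
  have "(\<Sum>i\<in>I. \<Sum>x\<in>C i. \<mu> x) = (\<Sum>i\<in>I. \<Sum>x\<in>X. of_bool (x \<in> C i) * \<mu> x)"
    by (rule sum.cong[OF refl]) (use assms(1,3) in \<open>simp add: Int_absorb1\<close>)
  also have "\<dots> = (\<Sum>x\<in>X. \<Sum>i\<in>I. of_bool (x \<in> C i) * \<mu> x)"
    by (rule sum.swap)
  also have "\<dots> = (\<Sum>x\<in>X. \<mu> x * card {i\<in>I. x \<in> C i})"
    using assms(2) by (simp add: Collect_conj_eq mult.commute)
  finally show ?thesis .
qed

lemma agrees_imp_archimedean:
  assumes "finite X" "agrees_with X \<Sigma> Pl \<mu>"
  shows "archimedean X \<Sigma> Pl"
  unfolding archimedean_def
proof (intro allI impI)
  fix n :: nat and A B :: "nat \<Rightarrow> 'a set"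
  assume "1 \<le> n \<and> (\<forall>i\<in>{1..n}. A i \<in> events X \<Sigma> \<and> B i \<in> events X \<Sigma>) \<and>
    (\<forall>x\<in>X. card {i\<in>{1..n}. x \<in> A i} = card {i\<in>{1..n}. x \<in> B i}) \<and>
    (\<forall>i\<in>{1..<n}. Pl (A i) \<le> Pl (B i))"
  then have n: "1 \<le> n" and ev: "\<And>i. i \<in> {1..n} \<Longrightarrow> A i \<in> events X \<Sigma> \<and> B i \<in> events X \<Sigma>"
    and count: "\<forall>x\<in>X. card {i\<in>{1..n}. x \<in> A i} = card {i\<in>{1..n}. x \<in> B i}"
    and le: "\<forall>i\<in>{1..<n}. Pl (A i) \<le> Pl (B i)"
    by auto
  have agree: "Pl C \<le> Pl D \<longleftrightarrow> sum \<mu> C \<le> sum \<mu> D" if "C \<in> events X \<Sigma>" "D \<in> events X \<Sigma>" for C D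
    using assms(2) that unfolding agrees_with_def by blast
  have sub: "A i \<subseteq> X" "B i \<subseteq> X" if "i \<in> {1..n}" for i
    using ev[OF that] by (auto simp: events_def)
  have "(\<Sum>i\<in>{1..n}. sum \<mu> (A i)) = (\<Sum>x\<in>X. \<mu> x * card {i\<in>{1..n}. x \<in> A i})"
    using sub by (intro sum_family_eq_sum_count[OF assms(1)]) auto
  also have "\<dots> = (\<Sum>x\<in>X. \<mu> x * card {i\<in>{1..n}. x \<in> B i})"
    using count by simp
  also have "\<dots> = (\<Sum>i\<in>{1..n}. sum \<mu> (B i))"
    using sub by (intro sum_family_eq_sum_count[OF assms(1), symmetric]) auto
  moreover have "{1..n} = insert n {1..<n}" using n by auto
  moreover have "(\<Sum>i\<in>{1..<n}. sum \<mu> (A i)) \<le> (\<Sum>i\<in>{1..<n}. sum \<mu> (B i))"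
  proof (rule sum_mono)
    fix i assume "i \<in> {1..<n}"
    then show "sum \<mu> (A i) \<le> sum \<mu> (B i)" using le ev[of i] agree[of "A i" "B i"] by auto
  qed
  ultimately have "sum \<mu> (B n) \<le> sum \<mu> (A n)" by simp
  then show "Pl (B n) \<le> Pl (A n)" using agree[of "B n" "A n"] ev[of n] n by simp
qed

text \<open>The pair \<open>(A, B)\<close> of events encodes the constraint \<open>\<mu>(B) - \<mu>(A) \<ge> 0\<close>,
  strict if \<open>Pl A < Pl B\<close>.\<close>
definition pair_constraint :: "('a set \<Rightarrow> 'd::order) \<Rightarrow> 'a set \<times> 'a set \<Rightarrow> ('a \<Rightarrow> int) \<times> bool" where
  "pair_constraint Pl AB =
     (\<lambda>x. of_bool (x \<in> snd AB) - of_bool (x \<in> fst AB), Pl (fst AB) < Pl (snd AB))"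

definition plaus_constraints ::
    "'a set \<Rightarrow> 'a set set \<Rightarrow> ('a set \<Rightarrow> 'd::order) \<Rightarrow> (('a \<Rightarrow> int) \<times> bool) set" where
  "plaus_constraints X \<Sigma> Pl =
     pair_constraint Pl ` {(A, B) \<in> events X \<Sigma> \<times> events X \<Sigma>. Pl A \<le> Pl B}"

lemma finite_events: "finite X \<Longrightarrow> finite (events X \<Sigma>)"
  by (rule finite_subset[of _ "Pow X"]) (auto simp: events_def)

lemma finite_plaus_constraints: "finite X \<Longrightarrow> finite (plaus_constraints X \<Sigma> Pl)"
  unfolding plaus_constraints_def
  by (rule finite_imageI, rule finite_subset[of _ "events X \<Sigma> \<times> events X \<Sigma>"])
    (auto simp: finite_events)

lemma lin_form_pair_constraint:
  assumes "finite X" "A \<subseteq> X" "B \<subseteq> X"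
  shows "lin_form X (fst (pair_constraint Pl (A, B))) \<mu> = sum \<mu> B - sum \<mu> A"
  using assms
  by (simp add: lin_form_def pair_constraint_def left_diff_distrib sum_subtractf Int_absorb1)

lemma sum_list_of_bool: "(\<Sum>q\<leftarrow>qs. of_bool (P q)) = (of_nat (length (filter P qs)) :: 'b::semiring_1)"
  by (induction qs) auto

lemma card_nth_indices: "card {i\<in>{1..length qs}. P (qs ! (i - 1))} = length (filter P qs)"
proof -
  have "{i\<in>{1..length qs}. P (qs ! (i - 1))} = Suc ` {i. i < length qs \<and> P (qs ! i)}"
  proof (intro equalityI subsetI)
    fix i assume "i \<in> {i\<in>{1..length qs}. P (qs ! (i - 1))}"
    then show "i \<in> Suc ` {i. i < length qs \<and> P (qs ! i)}"
      by (intro image_eqI[of _ _ "i - 1"]) auto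
  qed auto
  then show ?thesis by (simp add: card_image length_filter_conv_card)
qed

lemma card_nth_indices_eq:
  assumes "(\<Sum>q\<leftarrow>qs. of_bool (x \<in> snd q) - of_bool (x \<in> fst q) :: int) = 0"
  shows "card {i\<in>{1..length qs}. x \<in> fst (qs ! (i - 1))} =
    card {i\<in>{1..length qs}. x \<in> snd (qs ! (i - 1))}"
proof -
  have "int (length (filter (\<lambda>q. x \<in> snd q) qs)) - int (length (filter (\<lambda>q. x \<in> fst q) qs)) = 0"
    using assms by (simp add: sum_list_subtractf sum_list_of_bool)
  then show ?thesis
    using card_nth_indices[of qs "\<lambda>q. x \<in> fst q"] card_nth_indices[of qs "\<lambda>q. x \<in> snd q"] by simp
qed

text \<open>An infeasibility certificate, written as a list of pairs with a strict one last,
  is exactly a violation of the Archimedean property.\<close>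
lemma archimedean_imp_satisfiable:
  assumes "finite X" "archimedean X \<Sigma> Pl"
  shows "\<exists>\<mu>. satisfies X (plaus_constraints X \<Sigma> Pl) \<mu>"
proof (rule ccontr)
  let ?S = "{(A, B) \<in> events X \<Sigma> \<times> events X \<Sigma>. Pl A \<le> Pl B}"
  assume "\<nexists>\<mu>. satisfies X (plaus_constraints X \<Sigma> Pl) \<mu>"
  from motzkin_transposition[OF assms(1) finite_plaus_constraints[OF assms(1)] this]
  obtain a where a: "(a, True) \<in> pos_combs (plaus_constraints X \<Sigma> Pl)" "\<forall>x\<in>X. a x = 0"
    by blast
  from pos_combs_sum_list[OF a(1)] obtain ps where ps: "ps \<noteq> []"
    "set ps \<subseteq> plaus_constraints X \<Sigma> Pl" "\<forall>x. a x = (\<Sum>p\<leftarrow>ps. fst p x)" "snd (last ps)"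
    by auto
  have "ps \<in> lists (pair_constraint Pl ` ?S)"
    using ps(2) by (auto simp: plaus_constraints_def)
  then obtain qs where qs: "set qs \<subseteq> ?S" "ps = map (pair_constraint Pl) qs"
    unfolding lists_image by auto
  define n where "n = length qs"
  define A where "A i = fst (qs ! (i - 1))" for i
  define B where "B i = snd (qs ! (i - 1))" for i
  have n: "1 \<le> n" using ps(1) qs(2) by (simp add: n_def Suc_le_eq)
  have AB: "A i \<in> events X \<Sigma> \<and> B i \<in> events X \<Sigma> \<and> Pl (A i) \<le> Pl (B i)" if "i \<in> {1..n}" for i
  proof -
    have "qs ! (i - 1) \<in> set qs" using that by (auto simp: n_def)
    then show ?thesis using qs(1) by (auto simp: A_def B_def)
  qed
  have count: "\<forall>x\<in>X. card {i\<in>{1..n}. x \<in> A i} = card {i\<in>{1..n}. x \<in> B i}"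
  proof
    fix x assume "x \<in> X"
    have "(\<Sum>q\<leftarrow>qs. of_bool (x \<in> snd q) - of_bool (x \<in> fst q) :: int) = a x"
      using ps(3) qs(2) by (simp add: pair_constraint_def o_def)
    then show "card {i\<in>{1..n}. x \<in> A i} = card {i\<in>{1..n}. x \<in> B i}"
      using a(2) \<open>x \<in> X\<close> card_nth_indices_eq[of x qs] by (simp add: n_def A_def B_def)
  qed
  have "Pl (B n) \<le> Pl (A n)"
    using assms(2)[unfolded archimedean_def, rule_format, of n A B] n count AB by auto
  moreover have "Pl (A n) < Pl (B n)"
    using ps(1,4) qs(2) by (simp add: A_def B_def n_def last_map last_conv_nth pair_constraint_def)
  ultimately show False by simp
qed

lemma satisfiable_total_imp_agrees:
  assumes "finite X" "satisfies X (plaus_constraints X \<Sigma> Pl) \<mu>"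
    and total: "\<forall>a\<in>Pl ` events X \<Sigma>. \<forall>b\<in>Pl ` events X \<Sigma>. a \<le> b \<or> b \<le> a"
  shows "agrees_with X \<Sigma> Pl \<mu>"
proof -
  have mono: "if Pl A < Pl B then sum \<mu> A < sum \<mu> B else sum \<mu> A \<le> sum \<mu> B"
    if "A \<in> events X \<Sigma>" "B \<in> events X \<Sigma>" "Pl A \<le> Pl B" for A B
  proof -
    let ?c = "pair_constraint Pl (A, B)"
    have "?c \<in> plaus_constraints X \<Sigma> Pl"
      using that by (auto simp: plaus_constraints_def)
    then have "if snd ?c then 0 < lin_form X (fst ?c) \<mu> else 0 \<le> lin_form X (fst ?c) \<mu>"
      using assms(2) unfolding satisfies_def by blast
    moreover have "snd ?c \<longleftrightarrow> Pl A < Pl B"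
      by (simp add: pair_constraint_def)
    moreover have "lin_form X (fst ?c) \<mu> = sum \<mu> B - sum \<mu> A"
      using that(1,2) by (intro lin_form_pair_constraint[OF assms(1)]) (auto simp: events_def)
    ultimately show ?thesis by (simp split: if_splits)
  qed
  show ?thesis
    unfolding agrees_with_def
  proof (intro ballI iffI)
    fix A B assume "A \<in> events X \<Sigma>" "B \<in> events X \<Sigma>"
    show "sum \<mu> A \<le> sum \<mu> B" if "Pl A \<le> Pl B"
      using mono[OF \<open>A \<in> _\<close> \<open>B \<in> _\<close> that] by (auto split: if_splits)
    show "Pl A \<le> Pl B" if "sum \<mu> A \<le> sum \<mu> B"
    proof (rule ccontr)
      assume "\<not> Pl A \<le> Pl B"
      then have "Pl B < Pl A" using total \<open>A \<in> _\<close> \<open>B \<in> _\<close> by (auto simp: less_le_not_le)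
      then have "sum \<mu> B < sum \<mu> A" using mono[OF \<open>B \<in> _\<close> \<open>A \<in> _\<close>] by auto
      with that show False by simp
    qed
  qed
qed

lemma agrees_with_normalise:
  assumes "test_space X \<Sigma>" "plausibility X \<Sigma> Pl" "agrees_with X \<Sigma> Pl \<mu>"
  shows "\<exists>\<nu>. prob_measure X \<Sigma> \<nu> \<and> agrees_with X \<Sigma> Pl \<nu>"
proof (cases "\<Sigma> = {}")
  case True
  then have "X = {}" "events X \<Sigma> = {}" using assms(1) by (auto simp: test_space_def events_def)
  then show ?thesis by (intro exI[of _ \<mu>]) (simp add: True prob_measure_def agrees_with_def)
next
  case False
  then obtain T0 where T0: "T0 \<in> \<Sigma>" by blast
  have agree: "Pl A \<le> Pl B \<longleftrightarrow> sum \<mu> A \<le> sum \<mu> B" if "A \<in> events X \<Sigma>" "B \<in> events X \<Sigma>" for A B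
    using assms(3) that unfolding agrees_with_def by blast
  have pl_test: "\<And>T R. T \<in> \<Sigma> \<Longrightarrow> R \<in> \<Sigma> \<Longrightarrow> Pl T = Pl R"
    and pl_mono: "\<And>A B. A \<in> events X \<Sigma> \<Longrightarrow> B \<in> events X \<Sigma> \<Longrightarrow> A \<subseteq> B \<Longrightarrow> Pl A \<le> Pl B"
    and pl_pos: "\<And>T. T \<in> \<Sigma> \<Longrightarrow> Pl {} < Pl T"
    using assms(2) unfolding plausibility_def by blast+
  have test_event: "T \<in> events X \<Sigma>" if "T \<in> \<Sigma>" for T
    using that assms(1) by (auto simp: events_def test_space_def)
  have empty_event: "{} \<in> events X \<Sigma>" using T0 by (auto simp: events_def)
  define c where "c = sum \<mu> T0"
  have c_pos: "0 < c"
    using pl_pos[OF T0] agree[OF test_event[OF T0] empty_event] by (auto simp: c_def less_le_not_le)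
  have "sum \<mu> T = c" if "T \<in> \<Sigma>" for T
    using pl_test[OF that T0] agree[OF test_event[OF that] test_event[OF T0]]
      agree[OF test_event[OF T0] test_event[OF that]]
    by (simp add: c_def)
  moreover have "0 \<le> \<mu> x" if x: "x \<in> X" for x
  proof -
    obtain T where "T \<in> \<Sigma>" "x \<in> T" using x assms(1) unfolding test_space_def by blast
    then have "{x} \<in> events X \<Sigma>" using x by (auto simp: events_def)
    moreover from this have "Pl {} \<le> Pl {x}" using pl_mono[OF empty_event] by blast
    ultimately show ?thesis using agree[OF empty_event] by simp
  qed
  ultimately have "prob_measure X \<Sigma> (\<lambda>x. \<mu> x / c)"
    using c_pos by (simp add: prob_measure_def sum_divide_distrib[symmetric])
  moreover have "agrees_with X \<Sigma> Pl (\<lambda>x. \<mu> x / c)"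
    using assms(3) c_pos by (simp add: agrees_with_def sum_divide_distrib[symmetric] divide_le_cancel)
  ultimately show ?thesis by blast
qed

theorem theorem3:
  fixes X :: "'a set" and \<Sigma> :: "'a set set" and Pl :: "'a set \<Rightarrow> 'd::order"
  assumes "test_space X \<Sigma>" and "finite X" and "plausibility X \<Sigma> Pl"
  shows "(\<exists>\<mu>. prob_measure X \<Sigma> \<mu> \<and> agrees_with X \<Sigma> Pl \<mu>) \<longleftrightarrow>
         ((\<forall>a\<in>Pl ` events X \<Sigma>. \<forall>b\<in>Pl ` events X \<Sigma>. a \<le> b \<or> b \<le> a) \<and> archimedean X \<Sigma> Pl)"
proof
  assume "\<exists>\<mu>. prob_measure X \<Sigma> \<mu> \<and> agrees_with X \<Sigma> Pl \<mu>"
  then obtain \<mu> where agrees: "agrees_with X \<Sigma> Pl \<mu>" by blast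
  show "(\<forall>a\<in>Pl ` events X \<Sigma>. \<forall>b\<in>Pl ` events X \<Sigma>. a \<le> b \<or> b \<le> a) \<and> archimedean X \<Sigma> Pl"
    using agrees_imp_total[OF agrees] agrees_imp_archimedean[OF assms(2) agrees] by (rule conjI)
next
  assume "(\<forall>a\<in>Pl ` events X \<Sigma>. \<forall>b\<in>Pl ` events X \<Sigma>. a \<le> b \<or> b \<le> a) \<and> archimedean X \<Sigma> Pl"
  then have total: "\<forall>a\<in>Pl ` events X \<Sigma>. \<forall>b\<in>Pl ` events X \<Sigma>. a \<le> b \<or> b \<le> a"
    and arch: "archimedean X \<Sigma> Pl" by blast+
  obtain \<mu> where "satisfies X (plaus_constraints X \<Sigma> Pl) \<mu>"
    using archimedean_imp_satisfiable[OF assms(2) arch] by blast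
  from satisfiable_total_imp_agrees[OF assms(2) this total]
  show "\<exists>\<mu>. prob_measure X \<Sigma> \<mu> \<and> agrees_with X \<Sigma> Pl \<mu>"
    by (rule agrees_with_normalise[OF assms(1,3)])
qed

end
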